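(* Let $\chi\in\chi(G)$ be a character, $\lambda\in\Lambda^\chi$ and $x\in X$. The following are equivalent: (1) $x\in S^\chi_\lambda$; (2) the function $v\mapsto\langle\chi,v\rangle/\|v\|$ on $\sigma_x\setminus\{0\}$ attains a negative relative minimum at $\lambda$; (3) $L(S_x)\subset S^\chi_\lambda$.
   Context: $G$ diagonalizable over $\mathbf C$ acting on $X=\mathbf A^n_{\mathbf C}$ by $g\cdot x=(\chi_1(g)x_1,\dots,\chi_n(g)x_n)$. $\chi(G)$ characters, $\Gamma(G)$ one-parameter subgroups, pairing $\chi(\lambda(t))=t^{\langle\chi,\lambda\rangle}$ extended to $\mathbf R$; fixed norm $\|\cdot\|$ on $\Gamma(G)$ from an inner product on $\Gamma(G)_{\mathbf R}$ integral on $\Gamma(G)$. $[n]=\{1,\dots,n\}$; $S_x=\{i:x_i\ne0\}$; $\sigma_x=\{v\in\Gamma(G)_{\mathbf R}:\langle\chi_i,v\rangle\ge0\ \forall i\in S_x\}$ (its lattice points are the $\lambda$ with $\lim_{t\to0}\lambda(t)x$ existing). $x$ is $\chi$-unstable if some $\lambda$ with existing limit has $\langle\chi,\lambda\rangle<0$; for unstable $x$, $\lambda_{\chi,x}$ is the unique indivisible one-parameter subgroup with existing limit minimizing $\langle\chi,\lambda\rangle/\|\lambda\|$ among nonzero such. $\Lambda^\chi=\{\lambda_{\chi,x}\}$, $S^\chi_\lambda=\{x\text{ unstable}:\lambda_{\chi,x}=\lambda\}$. For $S\subset[n]$, $L(S)=\{x:x_i\ne0\iff i\in S\}$. *)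

theory Defs
  imports "HOL-Analysis.Analysis"
begin

text \<open>Model: \<Gamma>(G) = int^'r (so \<Gamma>(G)_R = real^'r); a character is represented by the
  integer linear functional it induces on \<Gamma>(G), i.e. a vector in int^'r.
  The action on X = complex^'n is given by the characters chis i, i in 'n.\<close>

definition ipair :: "int^'r::finite \<Rightarrow> int^'r \<Rightarrow> int" where
  "ipair c l = (\<Sum>j\<in>UNIV. c$j * l$j)"

definition pair :: "int^'r::finite \<Rightarrow> real^'r \<Rightarrow> real" where
  "pair c v = (\<Sum>j\<in>UNIV. of_int (c$j) * v$j)"

definition rvec :: "int^'r::finite \<Rightarrow> real^'r" where
  "rvec l = (\<chi> j. of_int (l$j))"

definition qform :: "int^'r::finite^'r \<Rightarrow> real^'r \<Rightarrow> real" where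
  "qform Q v = (\<Sum>i\<in>UNIV. \<Sum>j\<in>UNIV. v$i * of_int (Q$i$j) * v$j)"

definition integral_inner_product :: "int^'r::finite^'r \<Rightarrow> bool" where
  "integral_inner_product Q \<longleftrightarrow> (\<forall>i j. Q$i$j = Q$j$i) \<and> (\<forall>v. v \<noteq> 0 \<longrightarrow> 0 < qform Q v)"

definition qnorm :: "int^'r::finite^'r \<Rightarrow> real^'r \<Rightarrow> real" where
  "qnorm Q v = sqrt (qform Q v)"

definition ops_act :: "('n::finite \<Rightarrow> int^'r::finite) \<Rightarrow> int^'r \<Rightarrow> complex \<Rightarrow> complex^'n \<Rightarrow> complex^'n" where
  "ops_act chis l t x = (\<chi> i. t powi (ipair (chis i) l) * x$i)"

definition has_limit :: "('n::finite \<Rightarrow> int^'r::finite) \<Rightarrow> int^'r \<Rightarrow> complex^'n \<Rightarrow> bool" where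
  "has_limit chis l x \<longleftrightarrow> (\<exists>y. ((\<lambda>t. ops_act chis l t x) \<longlongrightarrow> y) (at 0))"

definition supp :: "complex^'n::finite \<Rightarrow> 'n set" where
  "supp x = {i. x$i \<noteq> 0}"

definition sigma :: "('n::finite \<Rightarrow> int^'r::finite) \<Rightarrow> complex^'n \<Rightarrow> (real^'r) set" where
  "sigma chis x = {v. \<forall>i\<in>supp x. 0 \<le> pair (chis i) v}"

definition Lstr :: "'n::finite set \<Rightarrow> (complex^'n) set" where
  "Lstr S = {x. supp x = S}"

definition indivisible :: "int^'r::finite \<Rightarrow> bool" where
  "indivisible l \<longleftrightarrow> l \<noteq> 0 \<and> (\<forall>k m. l = k *s m \<longrightarrow> k = 1 \<or> k = -1)"

definition unstable :: "('n::finite \<Rightarrow> int^'r::finite) \<Rightarrow> int^'r \<Rightarrow> complex^'n \<Rightarrow> bool" where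
  "unstable chis c x \<longleftrightarrow> (\<exists>l. has_limit chis l x \<and> ipair c l < 0)"

definition ratio :: "int^'r::finite^'r \<Rightarrow> int^'r \<Rightarrow> real^'r \<Rightarrow> real" where
  "ratio Q c v = pair c v / qnorm Q v"

definition optimal :: "('n::finite \<Rightarrow> int^'r::finite) \<Rightarrow> int^'r^'r \<Rightarrow> int^'r \<Rightarrow> complex^'n \<Rightarrow> int^'r \<Rightarrow> bool" where
  "optimal chis Q c x l \<longleftrightarrow> indivisible l \<and> has_limit chis l x \<and>
     (\<forall>m. m \<noteq> 0 \<and> has_limit chis m x \<longrightarrow> ratio Q c (rvec l) \<le> ratio Q c (rvec m))"

definition lam :: "('n::finite \<Rightarrow> int^'r::finite) \<Rightarrow> int^'r^'r \<Rightarrow> int^'r \<Rightarrow> complex^'n \<Rightarrow> int^'r" where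
  "lam chis Q c x = (THE l. optimal chis Q c x l)"

definition Sstrat :: "('n::finite \<Rightarrow> int^'r::finite) \<Rightarrow> int^'r^'r \<Rightarrow> int^'r \<Rightarrow> int^'r \<Rightarrow> (complex^'n) set" where
  "Sstrat chis Q c l = {x. unstable chis c x \<and> lam chis Q c x = l}"

definition Lambda :: "('n::finite \<Rightarrow> int^'r::finite) \<Rightarrow> int^'r^'r \<Rightarrow> int^'r \<Rightarrow> (int^'r) set" where
  "Lambda chis Q c = {lam chis Q c x | x. unstable chis c x}"

definition neg_rel_min_at :: "(real^'r::finite \<Rightarrow> real) \<Rightarrow> (real^'r) set \<Rightarrow> real^'r \<Rightarrow> bool" where
  "neg_rel_min_at f D p \<longleftrightarrow> p \<in> D \<and> f p < 0 \<and>
     (\<exists>e>0. \<forall>v\<in>D. dist v p < e \<longrightarrow> f p \<le> f v)"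

end

theory Submission
  imports Defs
begin

text \<open>The limit of \<open>\<lambda>(t) x\<close> for \<open>t \<rightarrow> 0\<close> exists iff \<open>\<langle>\<chi>\<^sub>i, \<lambda>\<rangle> \<ge> 0\<close> for all \<open>i \<in> S\<^sub>x\<close>,
  so all the data depend on \<open>x\<close> only through the rational polyhedral cone \<open>\<sigma>\<^sub>x\<close>; this
  gives (1) \<open>\<longleftrightarrow>\<close> (3). On a slice \<open>\<langle>\<chi>, v\<rangle> = const < 0\<close> of the convex cone \<open>\<sigma>\<^sub>x\<close> the ratio
  \<open>\<langle>\<chi>, v\<rangle> / \<parallel>v\<parallel>\<close> decreases as the strictly convex function \<open>\<parallel>v\<parallel>\<^sup>2\<close> increases, so a negative local
  minimum is global and the minimising ray is unique. The ray exists by compactness and is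
  rational: the minimiser on the slice \<open>\<langle>\<chi>, v\<rangle> = -1\<close> satisfies a Lagrange condition with
  rational coefficients, so a \<open>\<rat>\<close>-linear retraction \<open>\<real> \<rightarrow> \<rat>\<close>, applied coordinatewise, maps it
  to another solution, which positive definiteness forces to be the same point. Hence
  \<open>lam chis Q c x\<close> is the indivisible lattice point on the minimising ray, which gives (1) \<open>\<longleftrightarrow>\<close> (2).\<close>

definition gram :: "int^'r::finite^'r \<Rightarrow> real^'r \<Rightarrow> real^'r" where
  "gram Q v = (\<chi> j. \<Sum>i\<in>UNIV. v$i * of_int (Q$i$j))"

lemma linear_gram: "linear (gram Q)"
  by (rule linearI) (simp_all add: gram_def vec_eq_iff algebra_simps sum.distrib sum_distrib_left)

lemma continuous_on_gram: "continuous_on S (gram Q)"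
  using linear_gram linear_conv_bounded_linear linear_continuous_on by blast

lemma qform_eq_gram_inner: "qform Q v = gram Q v \<bullet> v"
  unfolding qform_def gram_def inner_vec_def
  by (subst sum.swap) (simp add: sum_distrib_right)

lemma gram_inner_commute:
  assumes "integral_inner_product Q"
  shows "gram Q u \<bullet> v = gram Q v \<bullet> u"
proof -
  have "Q$i$j = Q$j$i" for i j
    using assms by (simp add: integral_inner_product_def)
  then have "(\<Sum>j\<in>UNIV. \<Sum>i\<in>UNIV. u$i * of_int (Q$i$j) * v$j)
      = (\<Sum>i\<in>UNIV. \<Sum>j\<in>UNIV. v$j * of_int (Q$j$i) * u$i)"
    by (subst sum.swap) (simp add: mult_ac)
  then show ?thesis
    by (simp add: gram_def inner_vec_def sum_distrib_right)
qed

lemma qform_eq_0_iff: "integral_inner_product Q \<Longrightarrow> qform Q v = 0 \<longleftrightarrow> v = 0"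
  by (auto simp: integral_inner_product_def qform_eq_gram_inner linear_0[OF linear_gram])

lemma qform_nonneg: "integral_inner_product Q \<Longrightarrow> 0 \<le> qform Q v"
  by (cases "v = 0") (auto simp: integral_inner_product_def qform_eq_gram_inner linear_0[OF linear_gram]
      intro: less_imp_le)

lemma qform_add:
  "integral_inner_product Q \<Longrightarrow> qform Q (u + v) = qform Q u + 2 * (gram Q u \<bullet> v) + qform Q v"
  by (simp add: qform_eq_gram_inner linear_add[OF linear_gram] inner_add gram_inner_commute[of Q v u])

lemma qform_scaleR: "qform Q (a *\<^sub>R v) = a\<^sup>2 * qform Q v"
  by (simp add: qform_eq_gram_inner linear_scale[OF linear_gram] power2_eq_square)

lemma qform_convex_comb:
  assumes "integral_inner_product Q"
  shows "qform Q ((1 - t) *\<^sub>R u + t *\<^sub>R v)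
    = (1 - t) * qform Q u + t * qform Q v - t * (1 - t) * qform Q (v - u)"
  using assms
  by (simp add: qform_eq_gram_inner linear_add[OF linear_gram] linear_diff[OF linear_gram]
      linear_scale[OF linear_gram] inner_add inner_diff gram_inner_commute[of Q v u] algebra_simps)

lemma qnorm_pos: "integral_inner_product Q \<Longrightarrow> v \<noteq> 0 \<Longrightarrow> 0 < qnorm Q v"
  by (simp add: qnorm_def integral_inner_product_def)

lemma qnorm_scaleR: "qnorm Q (a *\<^sub>R v) = \<bar>a\<bar> * qnorm Q v"
  by (simp add: qnorm_def qform_scaleR real_sqrt_mult)

lemma continuous_on_qnorm: "continuous_on S (qnorm Q)"
  unfolding qnorm_def[abs_def] qform_eq_gram_inner
  by (intro continuous_intros continuous_on_gram)

lemma pair_eq_inner: "pair c v = rvec c \<bullet> v"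
  by (simp add: pair_def rvec_def inner_vec_def)

lemma pair_add: "pair c (u + v) = pair c u + pair c v"
  by (simp add: pair_eq_inner inner_add_right)

lemma pair_zero [simp]: "pair c 0 = 0"
  by (simp add: pair_eq_inner)

lemma pair_scaleR: "pair c (a *\<^sub>R v) = a * pair c v"
  by (simp add: pair_eq_inner)

lemma pair_rvec: "pair c (rvec l) = of_int (ipair c l)"
  by (simp add: pair_def rvec_def ipair_def)

lemma rvec_eq_iff: "rvec l = rvec m \<longleftrightarrow> l = m"
  by (simp add: rvec_def vec_eq_iff)

lemma rvec_eq_0_iff: "rvec l = 0 \<longleftrightarrow> l = 0"
  by (simp add: rvec_def vec_eq_iff)

lemma rvec_smult: "rvec (k *s l) = of_int k *\<^sub>R rvec l"
  by (simp add: rvec_def vec_eq_iff)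

lemma ratio_scaleR: "0 < a \<Longrightarrow> ratio Q c (a *\<^sub>R v) = ratio Q c v"
  by (simp add: ratio_def pair_scaleR qnorm_scaleR)

lemma ratio_neg_iff: "integral_inner_product Q \<Longrightarrow> v \<noteq> 0 \<Longrightarrow> ratio Q c v < 0 \<longleftrightarrow> pair c v < 0"
  using qnorm_pos[of Q v] by (simp add: ratio_def divide_less_0_iff)

lemma ratio_le_iff_qform_le:
  assumes "integral_inner_product Q" and "pair c u = pair c v" and "pair c v < 0"
  shows "ratio Q c u \<le> ratio Q c v \<longleftrightarrow> qform Q u \<le> qform Q v"
proof -
  have "u \<noteq> 0" "v \<noteq> 0"
    using assms(2,3) by (auto simp: pair_eq_inner)
  then have "0 < qnorm Q u" "0 < qnorm Q v"
    using qnorm_pos[OF assms(1)] by auto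
  with assms(2,3) have "ratio Q c u \<le> ratio Q c v \<longleftrightarrow> qnorm Q u \<le> qnorm Q v"
    by (simp add: ratio_def divide_simps mult.commute)
  then show ?thesis
    by (simp add: qnorm_def)
qed

lemma continuous_on_ratio: "integral_inner_product Q \<Longrightarrow> 0 \<notin> S \<Longrightarrow> continuous_on S (ratio Q c)"
  unfolding ratio_def[abs_def] pair_eq_inner
  by (intro continuous_intros continuous_on_qnorm) (metis less_irrefl qnorm_pos)

definition dual_cone :: "(int^'r::finite) set \<Rightarrow> (real^'r) set" where
  "dual_cone A = {v. \<forall>a\<in>A. 0 \<le> pair a v}"

lemma sigma_eq_dual_cone: "sigma chis x = dual_cone (chis ` supp x)"
  by (simp add: sigma_def dual_cone_def)

lemma convex_dual_cone: "convex (dual_cone A)"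
  by (auto simp: convex_def dual_cone_def pair_add pair_scaleR)

lemma conic_dual_cone: "conic (dual_cone A)"
  by (auto simp: conic_def dual_cone_def pair_scaleR)

lemma closed_dual_cone: "closed (dual_cone A)"
proof -
  have "dual_cone A = (\<Inter>a\<in>A. {v. 0 \<le> rvec a \<bullet> v})"
    by (auto simp: dual_cone_def pair_eq_inner)
  then show ?thesis
    by (simp add: closed_INT closed_Collect_le continuous_on_inner continuous_on_const continuous_on_id)
qed

definition neg_min_at :: "('a \<Rightarrow> real) \<Rightarrow> 'a set \<Rightarrow> 'a \<Rightarrow> bool" where
  "neg_min_at f D p \<longleftrightarrow> p \<in> D \<and> f p < 0 \<and> (\<forall>v\<in>D. f p \<le> f v)"

lemma neg_min_at_ratio_scaleR:
  assumes "conic C" and "0 < s" and "neg_min_at (ratio Q c) (C - {0}) p"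
  shows "neg_min_at (ratio Q c) (C - {0}) (s *\<^sub>R p)"
  using assms by (auto simp: neg_min_at_def ratio_scaleR conicD)

lemma neg_min_at_ratio_qform_le:
  assumes Q: "integral_inner_product Q" and min: "neg_min_at (ratio Q c) (C - {0}) p"
    and "v \<in> C" and v: "pair c v = pair c p"
  shows "qform Q p \<le> qform Q v"
proof -
  have "pair c p < 0"
    using min ratio_neg_iff[OF Q] by (auto simp: neg_min_at_def)
  moreover from this v have "v \<noteq> 0"
    by auto
  ultimately show ?thesis
    using min \<open>v \<in> C\<close> v ratio_le_iff_qform_le[OF Q, of c p v] by (auto simp: neg_min_at_def)
qed

lemma neg_min_at_ratio_unique:
  assumes Q: "integral_inner_product Q" and "convex C"
    and p: "neg_min_at (ratio Q c) (C - {0}) p" and q: "neg_min_at (ratio Q c) (C - {0}) q"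
    and pq: "pair c p = pair c q"
  shows "p = q"
proof -
  have "p \<in> C" "q \<in> C"
    using p q by (auto simp: neg_min_at_def)
  have eq: "qform Q p = qform Q q"
    using neg_min_at_ratio_qform_le[OF Q p \<open>q \<in> C\<close>] neg_min_at_ratio_qform_le[OF Q q \<open>p \<in> C\<close>] pq
    by simp
  define m where "m = (1/2) *\<^sub>R p + (1/2) *\<^sub>R q"
  have "m \<in> C"
    using \<open>convex C\<close> \<open>p \<in> C\<close> \<open>q \<in> C\<close> by (simp add: m_def convexD)
  moreover have "pair c m = pair c p"
    using pq by (simp add: m_def pair_add pair_scaleR)
  ultimately have "qform Q p \<le> qform Q m"
    by (rule neg_min_at_ratio_qform_le[OF Q p])
  also have "\<dots> = qform Q p - qform Q (q - p) / 4"
    using qform_convex_comb[OF Q, of "1/2" p q] eq by (simp add: m_def)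
  finally have "qform Q (q - p) = 0"
    using qform_nonneg[OF Q, of "q - p"] by simp
  then show ?thesis
    using qform_eq_0_iff[OF Q] by simp
qed

lemma ratio_segment_less:
  assumes Q: "integral_inner_product Q" and "pair c v = pair c p" "pair c p < 0"
    and "qform Q v < qform Q p" and "0 < t" "t \<le> 1"
  shows "ratio Q c ((1 - t) *\<^sub>R p + t *\<^sub>R v) < ratio Q c p"
proof -
  let ?w = "(1 - t) *\<^sub>R p + t *\<^sub>R v"
  have "pair c ?w = pair c p"
    using assms(2) unfolding pair_add pair_scaleR by (simp add: algebra_simps)
  have "qform Q ?w \<le> (1 - t) * qform Q p + t * qform Q v"
    using qform_nonneg[OF Q, of "v - p"] assms(5,6) by (simp add: qform_convex_comb[OF Q])
  also have "\<dots> < qform Q p"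
    using assms(4,5) by (simp add: algebra_simps)
  finally show ?thesis
    using ratio_le_iff_qform_le[OF Q, of c p ?w] \<open>pair c ?w = pair c p\<close> assms(3) by simp
qed

lemma neg_rel_min_at_ratio_imp_neg_min_at:
  assumes Q: "integral_inner_product Q" and "convex C" "conic C"
    and loc: "neg_rel_min_at (ratio Q c) (C - {0}) p"
  shows "neg_min_at (ratio Q c) (C - {0}) p"
proof (rule ccontr)
  obtain e where p: "p \<in> C - {0}" "ratio Q c p < 0" and "0 < e"
    and e: "\<forall>v\<in>C - {0}. dist v p < e \<longrightarrow> ratio Q c p \<le> ratio Q c v"
    using loc unfolding neg_rel_min_at_def by blast
  assume "\<not> neg_min_at (ratio Q c) (C - {0}) p"
  then obtain v where v: "v \<in> C - {0}" and "ratio Q c v < ratio Q c p"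
    using p by (auto simp: neg_min_at_def not_le)
  have "pair c p < 0" "pair c v < 0"
    using p v \<open>ratio Q c v < ratio Q c p\<close> ratio_neg_iff[OF Q] by fastforce+
  define s where "s = pair c p / pair c v"
  have "0 < s"
    using \<open>pair c p < 0\<close> \<open>pair c v < 0\<close> by (simp add: s_def divide_neg_neg)
  define v' where "v' = s *\<^sub>R v"
  have "v' \<in> C" "pair c v' = pair c p"
    using v \<open>0 < s\<close> \<open>pair c v < 0\<close> by (auto simp: v'_def s_def pair_scaleR conicD[OF \<open>conic C\<close>])
  have "ratio Q c v' < ratio Q c p"
    using \<open>ratio Q c v < ratio Q c p\<close> by (simp add: v'_def ratio_scaleR[OF \<open>0 < s\<close>])
  then have "qform Q v' < qform Q p"
    using ratio_le_iff_qform_le[OF Q, of c p v'] \<open>pair c v' = pair c p\<close> \<open>pair c p < 0\<close> by simp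
  define w where "w t = (1 - t) *\<^sub>R p + t *\<^sub>R v'" for t
  have "(w \<longlongrightarrow> p) (at_right 0)"
    unfolding w_def by (auto intro!: tendsto_eq_intros)
  then have "eventually (\<lambda>t. dist (w t) p < e) (at_right 0)"
    using \<open>0 < e\<close> by (rule tendstoD)
  moreover have "eventually (\<lambda>t. 0 < t \<and> t < (1::real)) (at_right 0)"
    by (auto simp: eventually_at_right_field intro: exI[of _ 1])
  ultimately have "eventually (\<lambda>t. dist (w t) p < e \<and> 0 < t \<and> t < 1) (at_right 0)"
    by (rule eventually_conj)
  then obtain t where t: "dist (w t) p < e" "0 < t" "t < 1"
    using eventually_happens' trivial_limit_at_right_real by blast
  have "ratio Q c (w t) < ratio Q c p"
    unfolding w_def using ratio_segment_less[OF Q] \<open>pair c v' = pair c p\<close> \<open>pair c p < 0\<close>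
      \<open>qform Q v' < qform Q p\<close> t by simp
  moreover have "w t \<in> C"
    using \<open>convex C\<close> p \<open>v' \<in> C\<close> t by (simp add: w_def convex_alt)
  moreover have "w t \<noteq> 0"
    using calculation(1) p(2) by (auto simp: ratio_def)
  ultimately show False
    using e t(1) by fastforce
qed

lemma neg_rel_min_at_ratio_iff:
  assumes "integral_inner_product Q" and "convex C" and "conic C"
  shows "neg_rel_min_at (ratio Q c) (C - {0}) p \<longleftrightarrow> neg_min_at (ratio Q c) (C - {0}) p"
  using neg_rel_min_at_ratio_imp_neg_min_at[OF assms]
  by (auto simp: neg_min_at_def neg_rel_min_at_def intro: exI[of _ 1])

lemma ratio_attains_neg_min:
  assumes Q: "integral_inner_product Q" and "closed C" "conic C"
    and "v \<in> C" and "pair c v < 0"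
  shows "\<exists>p. neg_min_at (ratio Q c) (C - {0}) p"
proof -
  let ?S = "C \<inter> sphere 0 1"
  have normalized: "(1 / norm u) *\<^sub>R u \<in> ?S" "ratio Q c ((1 / norm u) *\<^sub>R u) = ratio Q c u"
    if "u \<in> C - {0}" for u
    using that \<open>conic C\<close> by (auto simp: conicD ratio_scaleR)
  have "v \<in> C - {0}"
    using assms(4,5) by auto
  moreover have "compact ?S"
    using \<open>closed C\<close> by (simp add: closed_Int_compact)
  moreover have "continuous_on ?S (ratio Q c)"
    using Q by (auto intro: continuous_on_ratio)
  ultimately obtain p where "p \<in> ?S" and p: "\<forall>u\<in>?S. ratio Q c p \<le> ratio Q c u"
    using continuous_attains_inf[of ?S "ratio Q c"] normalized by blast
  then have "\<forall>u\<in>C - {0}. ratio Q c p \<le> ratio Q c u"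
    using normalized by metis
  moreover have "ratio Q c v < 0"
    using \<open>v \<in> C - {0}\<close> \<open>pair c v < 0\<close> ratio_neg_iff[OF Q] by blast
  ultimately show ?thesis
    using \<open>p \<in> ?S\<close> \<open>v \<in> C - {0}\<close> unfolding neg_min_at_def
    by (intro exI[of _ p]) (auto intro: le_less_trans)
qed

locale rat_linear_retraction =
  fixes g :: "real \<Rightarrow> real"
  assumes add: "g (x + y) = g x + g y"
    and mult_Rats: "q \<in> \<rat> \<Longrightarrow> g (q * x) = q * g x"
    and Rats: "g x \<in> \<rat>"
    and one: "g 1 = 1"
begin

lemma fixes_Rats: "q \<in> \<rat> \<Longrightarrow> g q = q"
  using mult_Rats[of q 1] one by simp

lemma sum: "g (sum f A) = (\<Sum>a\<in>A. g (f a))"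
  by (induction A rule: infinite_finite_induct) (auto simp: add fixes_Rats)

lemma mult_Rats_right: "q \<in> \<rat> \<Longrightarrow> g (x * q) = g x * q"
  using mult_Rats by (simp add: mult.commute)

lemma pair_map: "pair a (\<chi> j. g (v$j)) = g (pair a v)"
  by (simp add: pair_def sum mult_Rats)

lemma gram_map: "gram Q (\<chi> j. g (v$j)) = (\<chi> j. g (gram Q v $ j))"
  by (simp add: gram_def vec_eq_iff sum mult_Rats_right)

lemma map_span:
  assumes "finite B" and "w \<in> span (rvec ` B)"
  shows "(\<chi> j. g (w$j)) \<in> span (rvec ` B)"
proof -
  obtain \<mu> where w: "w = (\<Sum>u\<in>rvec ` B. \<mu> u *\<^sub>R u)"
    using assms by (auto simp: span_finite)
  have "u$j \<in> \<rat>" if "u \<in> rvec ` B" for u j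
    using that by (auto simp: rvec_def)
  then have "(\<chi> j. g (w$j)) = (\<Sum>u\<in>rvec ` B. g (\<mu> u) *\<^sub>R u)"
    by (simp add: w vec_eq_iff sum mult_Rats_right)
  then show ?thesis
    by (simp add: span_sum span_scale span_base)
qed

end

text \<open>Extend \<open>1\<close> to a Hamel basis of \<open>\<real>\<close> over \<open>\<rat>\<close>.\<close>

lemma rat_linear_retraction_exists: "\<exists>g. rat_linear_retraction g"
proof -
  interpret real: vector_space "\<lambda>q::rat. \<lambda>x::real. of_rat q * x"
    by unfold_locales (auto simp: algebra_simps of_rat_add of_rat_mult)
  interpret rat: vector_space "(*) :: rat \<Rightarrow> rat \<Rightarrow> rat"
    by unfold_locales (auto simp: algebra_simps)
  interpret vector_space_pair "\<lambda>q::rat. \<lambda>x::real. of_rat q * x" "(*) :: rat \<Rightarrow> rat \<Rightarrow> rat" ..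
  have "real.independent {1::real}"
    by (simp add: real.independent_insert real.span_empty)
  from linear_independent_extend[OF this, of "\<lambda>_. 1"]
  obtain h where "Vector_Spaces.linear (\<lambda>q::rat. \<lambda>x::real. of_rat q * x) (*) h" "h 1 = 1"
    by auto
  then interpret h: Vector_Spaces.linear "\<lambda>q::rat. \<lambda>x::real. of_rat q * x" "(*) :: rat \<Rightarrow> rat \<Rightarrow> rat" h
    by simp
  have "rat_linear_retraction (of_rat \<circ> h)"
    by unfold_locales (auto simp: h.add h.scale \<open>h 1 = 1\<close> of_rat_add of_rat_mult elim!: Rats_cases)
  then show ?thesis
    by blast
qed

lemma in_span_if_orthogonal_to_annihilator:
  fixes w :: "'a::euclidean_space"
  assumes "\<And>d. \<forall>u\<in>U. orthogonal u d \<Longrightarrow> orthogonal w d"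
  shows "w \<in> span U"
proof -
  have "orthogonal y w" if "y \<in> (span U)\<^sup>\<bottom>" for y
  proof -
    have "\<forall>u\<in>U. orthogonal u y"
      using that span_base by (auto simp: orthogonal_comp_def)
    then show ?thesis
      using assms orthogonal_commute by blast
  qed
  then have "w \<in> (span U)\<^sup>\<bottom>\<^sup>\<bottom>"
    by (simp add: orthogonal_comp_def)
  then show ?thesis
    by (simp add: orthogonal_comp_self)
qed

lemma gram_in_span_imp_Rats:
  assumes Q: "integral_inner_product Q" and "finite B"
    and span: "gram Q p \<in> span (rvec ` B)" and rat: "\<forall>b\<in>B. pair b p \<in> \<rat>"
  shows "p$j \<in> \<rat>"
proof -
  obtain g where "rat_linear_retraction g"
    using rat_linear_retraction_exists by blast
  interpret rat_linear_retraction g by fact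
  define \<delta> where "\<delta> = (\<chi> j. g (p$j)) - p"
  have "gram Q \<delta> \<in> span (rvec ` B)"
    using map_span[OF \<open>finite B\<close> span] span
    by (simp add: \<delta>_def linear_diff[OF linear_gram] gram_map span_diff)
  moreover have "orthogonal \<delta> (rvec b)" if "b \<in> B" for b
  proof -
    have "rvec b \<bullet> \<delta> = g (pair b p) - pair b p"
      by (simp add: \<delta>_def inner_diff_right pair_eq_inner[symmetric] pair_map)
    then show ?thesis
      using rat that by (simp add: orthogonal_def inner_commute fixes_Rats)
  qed
  ultimately have "orthogonal \<delta> (gram Q \<delta>)"
    by (auto intro: orthogonal_to_span)
  then have "qform Q \<delta> = 0"
    by (simp add: qform_eq_gram_inner orthogonal_def inner_commute)
  then have "p$j = g (p$j)"
    using qform_eq_0_iff[OF Q] by (simp add: \<delta>_def vec_eq_iff)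
  then show ?thesis
    using Rats by metis
qed

lemma qform_local_min_first_order:
  assumes Q: "integral_inner_product Q" and "0 < \<delta>"
    and min: "\<forall>t. \<bar>t\<bar> < \<delta> \<longrightarrow> qform Q p \<le> qform Q (p + t *\<^sub>R d)"
  shows "gram Q p \<bullet> d = 0"
proof -
  define f where "f t = qform Q p + 2 * t * (gram Q p \<bullet> d) + t\<^sup>2 * qform Q d" for t
  have f: "qform Q (p + t *\<^sub>R d) = f t" for t
    by (simp add: f_def qform_add[OF Q] qform_scaleR linear_scale[OF linear_gram])
  have "(f has_real_derivative 2 * (gram Q p \<bullet> d)) (at 0)"
    unfolding f_def by (auto intro!: derivative_eq_intros)
  moreover have "\<forall>t. \<bar>0 - t\<bar> < \<delta> \<longrightarrow> f 0 \<le> f t"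
    using min f[symmetric] by (simp add: f_def)
  ultimately have "2 * (gram Q p \<bullet> d) = 0"
    by (rule DERIV_local_min[OF _ \<open>0 < \<delta>\<close>])
  then show ?thesis
    by simp
qed

lemma dual_cone_feasible_direction:
  assumes "finite A" and "p \<in> dual_cone A" and d: "\<forall>a\<in>A. pair a p = 0 \<longrightarrow> pair a d = 0"
  shows "\<exists>\<delta>>0. \<forall>t. \<bar>t\<bar> < \<delta> \<longrightarrow> p + t *\<^sub>R d \<in> dual_cone A"
proof -
  have "eventually (\<lambda>t. 0 \<le> pair a p + t * pair a d) (nhds 0)" if "a \<in> A" for a
  proof (cases "pair a p = 0")
    case True
    then show ?thesis
      using d that by simp
  next
    case False
    then have "0 < pair a p"
      using \<open>p \<in> dual_cone A\<close> that by (auto simp: dual_cone_def order_le_less)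
    moreover have "((\<lambda>t. pair a p + t * pair a d) \<longlongrightarrow> pair a p) (nhds 0)"
      by (auto intro!: tendsto_eq_intros filterlim_ident)
    ultimately have "eventually (\<lambda>t. 0 < pair a p + t * pair a d) (nhds 0)"
      by (rule order_tendstoD(1)[rotated])
    then show ?thesis
      by (rule eventually_mono) simp
  qed
  then have "eventually (\<lambda>t. \<forall>a\<in>A. 0 \<le> pair a p + t * pair a d) (nhds 0)"
    using \<open>finite A\<close> by (simp add: eventually_ball_finite)
  then show ?thesis
    by (simp add: eventually_nhds_metric dist_real_def dual_cone_def pair_add pair_scaleR)
qed

lemma neg_min_at_ratio_lagrange:
  assumes Q: "integral_inner_product Q" and "finite A"
    and min: "neg_min_at (ratio Q c) (dual_cone A - {0}) p"
  shows "gram Q p \<in> span (rvec ` insert c {a\<in>A. pair a p = 0})"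
proof (rule in_span_if_orthogonal_to_annihilator)
  fix d assume "\<forall>u\<in>rvec ` insert c {a\<in>A. pair a p = 0}. orthogonal u d"
  then have "pair c d = 0" and "\<forall>a\<in>A. pair a p = 0 \<longrightarrow> pair a d = 0"
    by (simp_all add: orthogonal_def pair_eq_inner)
  moreover have "p \<in> dual_cone A"
    using min by (simp add: neg_min_at_def)
  ultimately obtain \<delta> where "0 < \<delta>" and feasible: "\<forall>t. \<bar>t\<bar> < \<delta> \<longrightarrow> p + t *\<^sub>R d \<in> dual_cone A"
    using dual_cone_feasible_direction[OF \<open>finite A\<close>] by blast
  have "pair c (p + t *\<^sub>R d) = pair c p" for t
    using \<open>pair c d = 0\<close> by (simp add: pair_add pair_scaleR)
  then have "\<forall>t. \<bar>t\<bar> < \<delta> \<longrightarrow> qform Q p \<le> qform Q (p + t *\<^sub>R d)"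
    using feasible neg_min_at_ratio_qform_le[OF Q min] by blast
  then show "orthogonal (gram Q p) d"
    using qform_local_min_first_order[OF Q \<open>0 < \<delta>\<close>] by (simp add: orthogonal_def)
qed

lemma neg_min_at_ratio_dual_cone_Rats:
  assumes Q: "integral_inner_product Q" and "finite A"
    and min: "neg_min_at (ratio Q c) (dual_cone A - {0}) p"
  shows "((-1 / pair c p) *\<^sub>R p)$j \<in> \<rat>"
proof -
  define pp where "pp = (-1 / pair c p) *\<^sub>R p"
  have "pair c p < 0"
    using min ratio_neg_iff[OF Q] by (auto simp: neg_min_at_def)
  then have "neg_min_at (ratio Q c) (dual_cone A - {0}) pp"
    unfolding pp_def by (intro neg_min_at_ratio_scaleR conic_dual_cone min) simp
  then have "gram Q pp \<in> span (rvec ` insert c {a\<in>A. pair a pp = 0})"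
    by (rule neg_min_at_ratio_lagrange[OF Q \<open>finite A\<close>])
  moreover have "\<forall>b\<in>insert c {a\<in>A. pair a pp = 0}. pair b pp \<in> \<rat>"
    using \<open>pair c p < 0\<close> by (simp add: pp_def pair_eq_inner)
  moreover have "finite (insert c {a\<in>A. pair a pp = 0})"
    using \<open>finite A\<close> by simp
  ultimately show ?thesis
    unfolding pp_def[symmetric] using gram_in_span_imp_Rats[OF Q] by blast
qed

definition entry_gcd :: "int^'n::finite \<Rightarrow> int" where
  "entry_gcd l = Gcd (range (vec_nth l))"

lemma entry_gcd_smult: "entry_gcd (k *s l) = \<bar>k\<bar> * entry_gcd l"
proof -
  have "range (vec_nth (k *s l)) = (*) k ` range (vec_nth l)"
    by auto
  then show ?thesis
    unfolding entry_gcd_def by (simp only: Gcd_mult) (simp add: abs_mult)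
qed

lemma entry_gcd_pos_iff: "0 < entry_gcd l \<longleftrightarrow> l \<noteq> 0"
  using Gcd_int_greater_eq_0[of "range (vec_nth l)"]
  by (auto simp: entry_gcd_def vec_eq_iff order_less_le)

lemma entry_gcd_dvd: "entry_gcd l dvd l$j"
  by (simp add: entry_gcd_def Gcd_dvd)

lemma indivisible_iff_entry_gcd: "indivisible l \<longleftrightarrow> entry_gcd l = 1"
proof
  assume l: "indivisible l"
  then have "0 < entry_gcd l"
    by (simp add: entry_gcd_pos_iff indivisible_def)
  have "l = entry_gcd l *s (\<chi> j. l$j div entry_gcd l)"
    by (simp add: vec_eq_iff entry_gcd_dvd)
  then have "entry_gcd l = 1 \<or> entry_gcd l = -1"
    using l unfolding indivisible_def by blast
  with \<open>0 < entry_gcd l\<close> show "entry_gcd l = 1"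
    by auto
next
  assume g: "entry_gcd l = 1"
  have "k = 1 \<or> k = -1" if "l = k *s m" for k m
  proof -
    have "\<bar>k\<bar> * entry_gcd m = 1"
      using g that by (simp add: entry_gcd_smult)
    then have "\<bar>k\<bar> = 1 \<or> \<bar>k\<bar> = -1"
      by (auto simp: zmult_eq_1_iff)
    then show ?thesis
      by arith
  qed
  moreover have "l \<noteq> 0"
    using g entry_gcd_pos_iff[of l] by simp
  ultimately show "indivisible l"
    by (simp add: indivisible_def)
qed

lemma indivisible_decomp:
  assumes "z \<noteq> 0"
  obtains k l where "0 < k" "indivisible l" "z = k *s l"
proof -
  define k where "k = entry_gcd z"
  define l where "l = (\<chi> j. z$j div k)"
  have "0 < k"
    using assms by (simp add: k_def entry_gcd_pos_iff)
  moreover have "z = k *s l"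
    by (simp add: l_def k_def vec_eq_iff entry_gcd_dvd)
  moreover have "indivisible l"
  proof -
    have "entry_gcd z = \<bar>k\<bar> * entry_gcd l"
      by (subst \<open>z = k *s l\<close>) (rule entry_gcd_smult)
    then show ?thesis
      using \<open>0 < k\<close> by (simp add: indivisible_iff_entry_gcd flip: k_def)
  qed
  ultimately show thesis
    using that by blast
qed

lemma indivisible_smult_cancel:
  assumes "indivisible l" "indivisible m" "0 < a" "0 < b" and eq: "a *s l = b *s m"
  shows "l = m"
proof -
  have "entry_gcd (a *s l) = entry_gcd (b *s m)"
    using eq by simp
  then have "a = b"
    using assms(1-4) entry_gcd_smult[of a l] entry_gcd_smult[of b m]
    by (simp add: indivisible_iff_entry_gcd)
  then show ?thesis
    using eq \<open>0 < a\<close> by (simp add: vec_eq_iff)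
qed

lemma rational_ray_indivisible:
  assumes "v \<noteq> 0" and rat: "\<forall>j. v$j \<in> \<rat>"
  obtains l s where "indivisible l" "0 < s" "rvec l = s *\<^sub>R v"
proof -
  have "\<exists>d::int. 0 < d \<and> of_int d * v$j \<in> \<int>" for j
  proof -
    obtain a b where "0 < b" "v$j = of_int a / of_int b"
      using rat Rats_cases' by metis
    then show ?thesis
      by (intro exI[of _ b]) simp
  qed
  then obtain d where d: "\<And>j. 0 < d j" "\<And>j. of_int (d j) * v$j \<in> \<int>"
    by metis
  define D where "D = (\<Prod>j\<in>UNIV. d j)"
  have "0 < D"
    using d(1) by (simp add: D_def prod_pos)
  have D_Ints: "of_int D * v$j \<in> \<int>" for j
  proof -
    have "D = d j * (\<Prod>i\<in>UNIV - {j}. d i)"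
      by (simp add: D_def prod.remove)
    then have D: "of_int D * v$j = of_int (\<Prod>i\<in>UNIV - {j}. d i) * (of_int (d j) * v$j)"
      by (simp add: mult_ac)
    then show ?thesis
      unfolding D by (intro Ints_mult Ints_of_int d(2))
  qed
  define z where "z = (\<chi> j. \<lfloor>of_int D * v$j\<rfloor>)"
  have z: "rvec z = of_int D *\<^sub>R v"
    using D_Ints by (auto simp: z_def rvec_def vec_eq_iff elim: Ints_cases)
  then have "z \<noteq> 0"
    using assms(1) \<open>0 < D\<close> by (auto simp: rvec_eq_0_iff[symmetric])
  then obtain k l where "0 < k" "indivisible l" "z = k *s l"
    by (rule indivisible_decomp)
  then have "of_int k *\<^sub>R rvec l = of_int D *\<^sub>R v"
    using z by (simp add: rvec_smult)
  then have "(1 / of_int k) *\<^sub>R (of_int k *\<^sub>R rvec l) = (of_int D / of_int k) *\<^sub>R v"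
    by simp
  then have "rvec l = (of_int D / of_int k) *\<^sub>R v"
    using \<open>0 < k\<close> by simp
  moreover have "0 < of_int D / (of_int k :: real)"
    using \<open>0 < D\<close> \<open>0 < k\<close> by simp
  ultimately show thesis
    using that \<open>indivisible l\<close> by blast
qed

lemma exists_indivisible_neg_min_at_ratio:
  assumes Q: "integral_inner_product Q" and "finite A"
    and "v \<in> dual_cone A" and "pair c v < 0"
  obtains l where "indivisible l" "neg_min_at (ratio Q c) (dual_cone A - {0}) (rvec l)"
proof -
  obtain p where p: "neg_min_at (ratio Q c) (dual_cone A - {0}) p"
    using ratio_attains_neg_min[OF Q closed_dual_cone conic_dual_cone assms(3,4)] by blast
  define s where "s = -1 / pair c p"
  have "pair c p < 0"
    using p ratio_neg_iff[OF Q] by (auto simp: neg_min_at_def)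
  then have "0 < s" "s *\<^sub>R p \<noteq> 0"
    using p by (auto simp: s_def neg_min_at_def)
  moreover have "\<forall>j. (s *\<^sub>R p)$j \<in> \<rat>"
    using neg_min_at_ratio_dual_cone_Rats[OF Q \<open>finite A\<close> p] by (simp add: s_def)
  ultimately obtain l t where "indivisible l" "0 < t" "rvec l = t *\<^sub>R (s *\<^sub>R p)"
    using rational_ray_indivisible[of "s *\<^sub>R p"] by blast
  moreover have "neg_min_at (ratio Q c) (dual_cone A - {0}) ((t * s) *\<^sub>R p)"
    using neg_min_at_ratio_scaleR[OF conic_dual_cone _ p] \<open>0 < s\<close> \<open>0 < t\<close> by simp
  ultimately show thesis
    using that by simp
qed

lemma indivisible_neg_min_at_ratio_unique:
  assumes Q: "integral_inner_product Q" and "convex C" "conic C"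
    and "indivisible l" "indivisible m"
    and l: "neg_min_at (ratio Q c) (C - {0}) (rvec l)" and m: "neg_min_at (ratio Q c) (C - {0}) (rvec m)"
  shows "l = m"
proof -
  define a where "a = - ipair c l"
  define b where "b = - ipair c m"
  have "0 < a" "0 < b"
    using l m ratio_neg_iff[OF Q] by (auto simp: neg_min_at_def a_def b_def pair_rvec)
  have "neg_min_at (ratio Q c) (C - {0}) (rvec (b *s l))"
    using neg_min_at_ratio_scaleR[OF \<open>conic C\<close> _ l] \<open>0 < b\<close> by (simp add: rvec_smult)
  moreover have "neg_min_at (ratio Q c) (C - {0}) (rvec (a *s m))"
    using neg_min_at_ratio_scaleR[OF \<open>conic C\<close> _ m] \<open>0 < a\<close> by (simp add: rvec_smult)
  moreover have "pair c (rvec (b *s l)) = pair c (rvec (a *s m))"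
    unfolding rvec_smult pair_scaleR pair_rvec a_def b_def by simp
  ultimately have "rvec (b *s l) = rvec (a *s m)"
    by (rule neg_min_at_ratio_unique[OF Q \<open>convex C\<close>])
  then have "b *s l = a *s m"
    by (simp add: rvec_eq_iff)
  then show ?thesis
    by (rule indivisible_smult_cancel[OF assms(4,5) \<open>0 < b\<close> \<open>0 < a\<close>])
qed

lemma ex_tendsto_powi_mult_iff:
  fixes a :: complex and k :: int
  shows "(\<exists>y. ((\<lambda>t. t powi k * a) \<longlongrightarrow> y) (at 0)) \<longleftrightarrow> a = 0 \<or> 0 \<le> k"
proof
  assume "\<exists>y. ((\<lambda>t. t powi k * a) \<longlongrightarrow> y) (at 0)"
  then obtain y where y: "((\<lambda>t. t powi k * a) \<longlongrightarrow> y) (at 0)"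
    by blast
  show "a = 0 \<or> 0 \<le> k"
  proof (rule ccontr)
    assume "\<not> (a = 0 \<or> 0 \<le> k)"
    then have "0 < - k"
      by simp
    have "((\<lambda>t. t powi (- k) * (t powi k * a)) \<longlongrightarrow> 0 powi (- k) * y) (at 0)"
      using \<open>0 < - k\<close> by (intro tendsto_intros y tendsto_power_int') simp_all
    moreover have "eventually (\<lambda>t. t powi (- k) * (t powi k * a) = a) (at (0::complex))"
      by (auto simp: eventually_at_filter power_int_minus)
    ultimately have "((\<lambda>t. a) \<longlongrightarrow> 0) (at (0::complex))"
      using \<open>0 < - k\<close> by (simp add: tendsto_cong)
    then show False
      using \<open>\<not> (a = 0 \<or> 0 \<le> k)\<close> by (simp add: tendsto_const_iff)
  qed
next
  assume "a = 0 \<or> 0 \<le> k"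
  then show "\<exists>y. ((\<lambda>t. t powi k * a) \<longlongrightarrow> y) (at 0)"
  proof
    assume "0 \<le> k"
    then have "((\<lambda>t. t powi k * a) \<longlongrightarrow> 0 powi k * a) (at 0)"
      by (intro tendsto_intros tendsto_power_int') simp_all
    then show ?thesis ..
  qed (auto intro: tendsto_const)
qed

lemma ex_tendsto_vec_iff:
  "(\<exists>y. (f \<longlongrightarrow> y) F) \<longleftrightarrow> (\<forall>i. \<exists>y. ((\<lambda>t. f t $ i) \<longlongrightarrow> y) F)"
proof
  assume "\<forall>i. \<exists>y. ((\<lambda>t. f t $ i) \<longlongrightarrow> y) F"
  then obtain y where "\<And>i. ((\<lambda>t. f t $ i) \<longlongrightarrow> y i) F"
    by metis
  then have "(f \<longlongrightarrow> (\<chi> i. y i)) F"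
    by (intro vec_tendstoI) simp
  then show "\<exists>y. (f \<longlongrightarrow> y) F" ..
qed (auto intro: tendsto_vec_nth)

lemma has_limit_iff: "has_limit chis l x \<longleftrightarrow> rvec l \<in> sigma chis x"
  unfolding has_limit_def ops_act_def ex_tendsto_vec_iff
  by (auto simp: ex_tendsto_powi_mult_iff sigma_def supp_def pair_rvec)

lemma unstable_iff: "unstable chis c x \<longleftrightarrow> (\<exists>l. rvec l \<in> sigma chis x \<and> ipair c l < 0)"
  by (simp add: unstable_def has_limit_iff)

lemma exists_indivisible_neg_min_at_sigma:
  assumes "integral_inner_product Q" and "unstable chis c x"
  obtains l where "indivisible l" "neg_min_at (ratio Q c) (sigma chis x - {0}) (rvec l)"
proof -
  obtain l0 where "rvec l0 \<in> dual_cone (chis ` supp x)" "pair c (rvec l0) < 0"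
    using assms(2) by (auto simp: unstable_iff sigma_eq_dual_cone pair_rvec)
  moreover have "finite (chis ` supp x)"
    by simp
  ultimately obtain l where "indivisible l"
      and "neg_min_at (ratio Q c) (dual_cone (chis ` supp x) - {0}) (rvec l)"
    using exists_indivisible_neg_min_at_ratio[OF assms(1)] by blast
  then show thesis
    using that by (simp add: sigma_eq_dual_cone)
qed

lemma optimal_iff_neg_min_at:
  assumes Q: "integral_inner_product Q" and "unstable chis c x"
  shows "optimal chis Q c x l
    \<longleftrightarrow> indivisible l \<and> neg_min_at (ratio Q c) (sigma chis x - {0}) (rvec l)"
proof
  assume opt: "optimal chis Q c x l"
  then have l: "indivisible l" "rvec l \<in> sigma chis x - {0}"
    by (auto simp: optimal_def has_limit_iff indivisible_def rvec_eq_0_iff)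
  obtain z where "indivisible z" and z: "neg_min_at (ratio Q c) (sigma chis x - {0}) (rvec z)"
    using exists_indivisible_neg_min_at_sigma[OF assms] .
  then have "ratio Q c (rvec l) \<le> ratio Q c (rvec z)"
    using opt by (simp add: optimal_def has_limit_iff neg_min_at_def indivisible_def)
  moreover have "ratio Q c (rvec z) < 0" "\<forall>v\<in>sigma chis x - {0}. ratio Q c (rvec z) \<le> ratio Q c v"
    using z by (simp_all add: neg_min_at_def)
  ultimately show "indivisible l \<and> neg_min_at (ratio Q c) (sigma chis x - {0}) (rvec l)"
    using l unfolding neg_min_at_def by force
qed (auto simp: optimal_def has_limit_iff neg_min_at_def rvec_eq_0_iff)

lemma lam_eq_iff:
  assumes Q: "integral_inner_product Q" and "unstable chis c x"
  shows "lam chis Q c x = l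
    \<longleftrightarrow> indivisible l \<and> neg_min_at (ratio Q c) (sigma chis x - {0}) (rvec l)"
proof -
  have ex1: "\<exists>!l. optimal chis Q c x l"
  proof (rule ex_ex1I)
    obtain l where "indivisible l" "neg_min_at (ratio Q c) (sigma chis x - {0}) (rvec l)"
      using exists_indivisible_neg_min_at_sigma[OF assms] .
    then show "\<exists>l. optimal chis Q c x l"
      using optimal_iff_neg_min_at[OF assms] by blast
  next
    show "l = m" if "optimal chis Q c x l" "optimal chis Q c x m" for l m
      using that unfolding optimal_iff_neg_min_at[OF assms] sigma_eq_dual_cone
      by (intro indivisible_neg_min_at_ratio_unique[OF Q convex_dual_cone conic_dual_cone]) auto
  qed
  have "lam chis Q c x = l \<longleftrightarrow> optimal chis Q c x l"
  proof
    assume "lam chis Q c x = l"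
    then show "optimal chis Q c x l"
      using theI'[OF ex1] by (simp add: lam_def)
  next
    assume "optimal chis Q c x l"
    then show "lam chis Q c x = l"
      unfolding lam_def by (rule the1_equality[OF ex1])
  qed
  then show ?thesis
    by (simp add: optimal_iff_neg_min_at[OF assms])
qed

lemma Sstrat_iff:
  assumes Q: "integral_inner_product Q" and "indivisible l"
  shows "x \<in> Sstrat chis Q c l \<longleftrightarrow> neg_min_at (ratio Q c) (sigma chis x - {0}) (rvec l)"
proof
  assume min: "neg_min_at (ratio Q c) (sigma chis x - {0}) (rvec l)"
  then have "unstable chis c x"
    using ratio_neg_iff[OF Q] by (auto simp: unstable_iff neg_min_at_def pair_rvec)
  with min show "x \<in> Sstrat chis Q c l"
    using lam_eq_iff[OF Q \<open>unstable chis c x\<close>, of l] \<open>indivisible l\<close> by (simp add: Sstrat_def)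
next
  assume "x \<in> Sstrat chis Q c l"
  then show "neg_min_at (ratio Q c) (sigma chis x - {0}) (rvec l)"
    using lam_eq_iff[OF Q, of chis c x l] by (simp add: Sstrat_def)
qed

lemma indivisible_of_Lambda:
  assumes "integral_inner_product Q" and "l \<in> Lambda chis Q c"
  shows "indivisible l"
proof -
  obtain x where "unstable chis c x" "lam chis Q c x = l"
    using assms(2) by (auto simp: Lambda_def)
  then show ?thesis
    using lam_eq_iff[OF assms(1)] by blast
qed

theorem proposition3p13:
  fixes chis :: "'n::finite \<Rightarrow> int^'r::finite"
    and Q :: "int^'r^'r" and c l :: "int^'r" and x :: "complex^'n"
  assumes "integral_inner_product Q"
    and "l \<in> Lambda chis Q c"
  shows "(x \<in> Sstrat chis Q c l \<longleftrightarrow> neg_rel_min_at (ratio Q c) (sigma chis x - {0}) (rvec l))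
       \<and> (x \<in> Sstrat chis Q c l \<longleftrightarrow> Lstr (supp x) \<subseteq> Sstrat chis Q c l)"
proof -
  have S: "y \<in> Sstrat chis Q c l \<longleftrightarrow> neg_min_at (ratio Q c) (sigma chis y - {0}) (rvec l)" for y
    using Sstrat_iff[OF assms(1) indivisible_of_Lambda[OF assms]] .
  have "neg_rel_min_at (ratio Q c) (sigma chis x - {0}) (rvec l)
      \<longleftrightarrow> neg_min_at (ratio Q c) (sigma chis x - {0}) (rvec l)"
    unfolding sigma_eq_dual_cone
    by (rule neg_rel_min_at_ratio_iff[OF assms(1) convex_dual_cone conic_dual_cone])
  moreover have "Lstr (supp x) \<subseteq> Sstrat chis Q c l \<longleftrightarrow> x \<in> Sstrat chis Q c l"
  proof
    assume "x \<in> Sstrat chis Q c l"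
    then show "Lstr (supp x) \<subseteq> Sstrat chis Q c l"
      using S by (auto simp: Lstr_def sigma_def)
  qed (auto simp: Lstr_def)
  ultimately show ?thesis
    using S[of x] by blast
qed

end
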